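(* Let $S$ be an instance of 3-Partition (with $n_1\ge\cdots\ge n_{3m}$) and let $w_S$ and $\mathrm{Ver}_S$ be as defined below. (i) For any sequence of non-negative integers $\langle i_k\rangle_{k=1}^{3m}$ such that $i_{3j-2}+i_{3j-1}+i_{3j}=B$ for every $j\in\{1,\dots,m\}$, there is a computation $\varepsilon\,\|\,w_S\vdash^*\prod_{k=1}^{3m}(a_1b^{i_k}a_2)\,\|\,\mathrm{Ver}_S$. (ii) Conversely, if $\varepsilon\,\|\,w_S\vdash^* W\,\|\,\mathrm{Ver}_S\vdash^*\varepsilon\,\|\,\varepsilon$ (i.e. the configuration $W\,\|\,\mathrm{Ver}_S$ is reached in an accepting computation of $w_S$), then $W=\prod_{k=1}^{3m}(a_1b^{i_k}a_2)$ for some non-negative integers $i_1,\dots,i_{3m}$ satisfying $i_{3j-2}+i_{3j-1}+i_{3j}=B$ for every $j\in\{1,\dots,m\}$.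
   Context: Queue automaton: a configuration is written $Q\,\|\,x$ ($Q$ = queue contents, $x$ = remaining input); a step from $Q\,\|\,\sigma x$ ($\sigma$ a symbol) goes either to $Q\sigma\,\|\,x$ (push) or, if $Q=\sigma Q'$, to $Q'\,\|\,x$ (match/pop). $\vdash^*$ is zero or more steps; $\varepsilon$ is the empty string; an accepting computation of $w$ is a computation $\varepsilon\,\|\,w\vdash^*\varepsilon\,\|\,\varepsilon$. An instance of 3-Partition is a sequence $S=\langle n_i:1\le i\le 3m\rangle$ of natural numbers such that $B=(\sum_{i=1}^{3m}n_i)/m$ is an integer and $B/4<n_i<B/2$ for all $i$; throughout, the $n_i$ are assumed to be in non-increasing order. The alphabet is $\{a_1,a_2,b,e_0,e,c_1,c_2,x,y\}$; $u^i$ denotes $i$ concatenated copies of $u$ and $\prod_{\ell=1}^k u_\ell=u_1u_2\cdots u_k$. Define $U_\ell=a_1^2b^\ell a_2^2$, $v_\ell=c_1x^\ell y^\ell c_2$, $D_k=U_{n_k}^{3m-k+1}$, $E_k=U_B^{3m-k}\,a_1b^{n_k}a_2\,U_B^{3m-k}$, $F_k=U_B^{2(3m-k)}$, and $\mathrm{Load}_S=e_0\prod_{i=1}^m(b^{2B}e)$, $\mathrm{Dist}_S=e_0\prod_{i=1}^m((a_1b^Ba_2)^3e)$, $\mathrm{Ver}_S=\prod_{k=1}^{3m}[v_{4k-3}D_kv_{4k-3}\,v_{4k-2}D_kv_{4k-2}\,v_{4k-1}E_kv_{4k-1}\,v_{4k}F_kv_{4k}]$, and $w_S=\mathrm{Load}_S\mathrm{Dist}_S\mathrm{Ver}_S$.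 *)

theory Defs
  imports Main
begin

datatype sym = a\<^sub>1 | a\<^sub>2 | b | e\<^sub>0 | e | c\<^sub>1 | c\<^sub>2 | x | y

text \<open>Configurations Q || x are pairs (queue contents, remaining input).\<close>
inductive qstep :: "sym list \<times> sym list \<Rightarrow> sym list \<times> sym list \<Rightarrow> bool" where
  push: "qstep (Q, \<sigma> # w) (Q @ [\<sigma>], w)"
| pop:  "qstep (\<sigma> # Q, \<sigma> # w) (Q, w)"

abbreviation qsteps :: "sym list \<times> sym list \<Rightarrow> sym list \<times> sym list \<Rightarrow> bool" where
  "qsteps \<equiv> qstep\<^sup>*\<^sup>*"

definition pw :: "sym list \<Rightarrow> nat \<Rightarrow> sym list" where
  "pw u i = concat (replicate i u)"

definition prodw :: "nat \<Rightarrow> (nat \<Rightarrow> sym list) \<Rightarrow> sym list" where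
  "prodw n f = concat (map f [1..<Suc n])"

text \<open>A 3-Partition instance: n_k = ns ! (k-1), k = 1..3m, non-increasing.\<close>
definition three_partition_instance :: "nat list \<Rightarrow> nat \<Rightarrow> nat \<Rightarrow> bool" where
  "three_partition_instance ns m B \<longleftrightarrow>
     m > 0 \<and> length ns = 3 * m \<and> sum_list ns = m * B \<and>
     (\<forall>i < 3 * m. B < 4 * ns ! i \<and> 2 * ns ! i < B) \<and>
     sorted_wrt (\<ge>) ns"

definition U :: "nat \<Rightarrow> sym list" where
  "U l = [a\<^sub>1, a\<^sub>1] @ replicate l b @ [a\<^sub>2, a\<^sub>2]"

definition vw :: "nat \<Rightarrow> sym list" where
  "vw l = [c\<^sub>1] @ replicate l x @ replicate l y @ [c\<^sub>2]"

definition Dw :: "nat list \<Rightarrow> nat \<Rightarrow> nat \<Rightarrow> sym list" where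
  "Dw ns m k = pw (U (ns ! (k - 1))) (3 * m - k + 1)"

definition Ew :: "nat list \<Rightarrow> nat \<Rightarrow> nat \<Rightarrow> nat \<Rightarrow> sym list" where
  "Ew ns m B k = pw (U B) (3 * m - k) @ [a\<^sub>1] @ replicate (ns ! (k - 1)) b @ [a\<^sub>2] @ pw (U B) (3 * m - k)"

definition Fw :: "nat \<Rightarrow> nat \<Rightarrow> nat \<Rightarrow> sym list" where
  "Fw m B k = pw (U B) (2 * (3 * m - k))"

definition Load :: "nat \<Rightarrow> nat \<Rightarrow> sym list" where
  "Load m B = e\<^sub>0 # prodw m (\<lambda>i. replicate (2 * B) b @ [e])"

definition Dist :: "nat \<Rightarrow> nat \<Rightarrow> sym list" where
  "Dist m B = e\<^sub>0 # prodw m (\<lambda>i. pw ([a\<^sub>1] @ replicate B b @ [a\<^sub>2]) 3 @ [e])"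

definition Ver :: "nat list \<Rightarrow> nat \<Rightarrow> nat \<Rightarrow> sym list" where
  "Ver ns m B = prodw (3 * m) (\<lambda>k.
      vw (4*k-3) @ Dw ns m k @ vw (4*k-3) @
      vw (4*k-2) @ Dw ns m k @ vw (4*k-2) @
      vw (4*k-1) @ Ew ns m B k @ vw (4*k-1) @
      vw (4*k) @ Fw m B k @ vw (4*k))"

definition wS :: "nat list \<Rightarrow> nat \<Rightarrow> nat \<Rightarrow> sym list" where
  "wS ns m B = Load m B @ Dist m B @ Ver ns m B"

end

theory Submission
  imports Defs
begin

text \<open>For (i) the automaton pushes all of \<open>Load\<close>, matches the second \<open>e\<^sub>0\<close> against the first,
  and then, while reading the \<open>j\<close>-th group \<open>(a\<^sub>1 b\<^sup>B a\<^sub>2)\<^sup>3 e\<close> of \<open>Dist\<close>, matches \<open>2B\<close> of its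
  \<open>b\<close>'s against the \<open>j\<close>-th run of \<open>2B\<close> \<open>b\<close>'s in the queue and pushes the remaining \<open>B\<close>.
  For (ii), everything left in the queue in front of \<open>Ver\<close> must be matched by \<open>Ver\<close>, so \<open>W\<close>
  contains neither \<open>e\<^sub>0\<close> nor \<open>e\<close>. Hence the two occurrences of \<open>e\<^sub>0\<close> are a push and a match,
  and counting \<open>e\<close>'s shows that every \<open>e\<close> of \<open>Dist\<close> must match one in the queue. Such a match
  forces all \<open>2B\<close> \<open>b\<close>'s in front of it to be matched by the preceding group, which therefore
  pushes blocks with exactly \<open>B\<close> \<open>b\<close>'s in total.\<close>

definition blk :: "nat \<Rightarrow> sym list" where
  "blk c = a\<^sub>1 # replicate c b @ [a\<^sub>2]"

lemma qsteps_push_word: "qsteps (Q, u @ v) (Q @ u, v)"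
proof (induction u arbitrary: Q)
  case (Cons s u)
  have "qstep (Q, s # u @ v) (Q @ [s], u @ v)" by (rule qstep.push)
  with Cons.IH[of "Q @ [s]"] show ?case by (simp add: converse_rtranclp_into_rtranclp)
qed simp

lemma qsteps_pop_word: "qsteps (u @ Q, u @ v) (Q, v)"
proof (induction u)
  case (Cons s u)
  have "qstep (s # u @ Q, s # u @ v) (u @ Q, u @ v)" by (rule qstep.pop)
  with Cons.IH show ?case by (simp add: converse_rtranclp_into_rtranclp)
qed simp

lemma qsteps_input_shrinks: "qsteps c c' \<Longrightarrow> c = c' \<or> length (snd c') < length (snd c)"
proof (induction rule: rtranclp_induct)
  case (step c1 c2)
  from step.hyps(2) have "length (snd c2) < length (snd c1)"
    by (cases rule: qstep.cases) auto
  with step.IH show ?case by auto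
qed simp

lemma qsteps_queue_subset: "qsteps c c' \<Longrightarrow> set (fst c) \<subseteq> set (snd c) \<union> set (fst c')"
proof (induction rule: converse_rtranclp_induct)
  case (step c1 c2)
  from step.hyps(1) show ?case
    by (cases rule: qstep.cases) (use step.IH in auto)
qed simp

fun queues_after :: "sym list \<Rightarrow> sym list \<Rightarrow> sym list set" where
  "queues_after Q [] = {Q}"
| "queues_after Q (s # u) = queues_after (Q @ [s]) u \<union>
     (case Q of [] \<Rightarrow> {} | q # Q' \<Rightarrow> if q = s then queues_after Q' u else {})"

lemma qsteps_imp_queues_after: "qsteps (Q, u @ v) (Q', v) \<Longrightarrow> Q' \<in> queues_after Q u"
proof (induction u arbitrary: Q)
  case Nil
  then show ?case using qsteps_input_shrinks by fastforce
next
  case (Cons s u)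
  from Cons.prems qsteps_input_shrinks[OF Cons.prems] obtain c
    where "qstep (Q, s # u @ v) c" and "qsteps c (Q', v)"
    by (auto elim: converse_rtranclpE)
  then show ?case
    by (cases rule: qstep.cases) (use Cons.IH in auto)
qed

lemma queues_after_append: "queues_after Q (u @ w) = (\<Union>Q'\<in>queues_after Q u. queues_after Q' w)"
  by (induction u arbitrary: Q) (auto split: list.splits)

lemma queues_after_front_unmatched: "s \<notin> set u \<Longrightarrow> queues_after (s # Q) u = {s # Q @ u}"
  by (induction u arbitrary: Q) auto

text \<open>Every occurrence of \<open>s\<close> that leaves the queue is matched by an occurrence in the input.\<close>
lemma count_list_queues_after:
  "Q' \<in> queues_after Q u \<Longrightarrow> count_list Q s \<le> count_list Q' s + count_list u s"
proof (induction u arbitrary: Q)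
  case (Cons t u)
  show ?case
  proof (cases "Q' \<in> queues_after (Q @ [t]) u")
    case True
    from Cons.IH[OF True] show ?thesis by simp
  next
    case False
    with Cons.prems obtain Q1 where "Q = t # Q1" "Q' \<in> queues_after Q1 u"
      by (auto split: list.splits if_splits)
    with Cons.IH show ?thesis by fastforce
  qed
qed simp

text \<open>The first \<open>s\<close> is pushed onto the empty queue and \<open>u\<close> lines up behind it; pushing the second
  \<open>s\<close> as well would leave an \<open>s\<close> in the queue for good.\<close>
lemma queues_after_marker:
  assumes "Q' \<in> queues_after [] (s # u @ s # v)" and "s \<notin> set u" "s \<notin> set v" "s \<notin> set Q'"
  shows "Q' \<in> queues_after u v"
proof -
  from assms(1,2) have "Q' \<in> queues_after (s # u) (s # v)"
    by (simp add: queues_after_append queues_after_front_unmatched)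
  with assms(3,4) show ?thesis
    by (auto simp: queues_after_front_unmatched)
qed

lemma count_list_concat_replicate:
  "count_list (concat (replicate n xs)) s = n * count_list xs s"
  by (induction n) auto

subsection \<open>Reading blocks against a queue of \<open>b\<close>'s\<close>

lemma queues_after_bs:
  assumes "Q' \<in> queues_after (replicate n b @ e # R) (replicate c b @ u)"
  shows "\<exists>p\<le>n. p \<le> c \<and> Q' \<in> queues_after (replicate (n - p) b @ e # R @ replicate (c - p) b) u"
  using assms
proof (induction c arbitrary: n R)
  case (Suc c)
  show ?case
  proof (cases "Q' \<in> queues_after (replicate n b @ e # R @ [b]) (replicate c b @ u)")
    case True
    with Suc.IH[of n "R @ [b]"] obtain p where "p \<le> n" "p \<le> c"
      "Q' \<in> queues_after (replicate (n - p) b @ e # R @ b # replicate (c - p) b) u" by auto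
    moreover have "replicate (Suc c - p) b = b # replicate (c - p) b"
      using \<open>p \<le> c\<close> by (simp add: Suc_diff_le)
    ultimately show ?thesis by (intro exI[of _ p]) auto
  next
    case False
    with Suc.prems obtain n' where n: "n = Suc n'"
      and "Q' \<in> queues_after (replicate n' b @ e # R) (replicate c b @ u)"
      by (cases n) auto
    with Suc.IH obtain p where "p \<le> n'" "p \<le> c"
      "Q' \<in> queues_after (replicate (n' - p) b @ e # R @ replicate (c - p) b) u" by blast
    with n show ?thesis by (intro exI[of _ "Suc p"]) auto
  qed
qed (intro exI[of _ 0], simp)

lemma queues_after_blk:
  assumes "Q' \<in> queues_after (replicate n b @ e # R) (blk c @ u)"
  shows "\<exists>p\<le>n. p \<le> c \<and> Q' \<in> queues_after (replicate (n - p) b @ e # R @ blk (c - p)) u"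
proof -
  have front_unmatched: "queues_after (replicate k b @ e # X) (s # w) =
      queues_after (replicate k b @ e # X @ [s]) w" if "s \<noteq> b" "s \<noteq> e" for k X s w
    using that by (cases k) auto
  have blk_input: "blk c @ u = a\<^sub>1 # replicate c b @ a\<^sub>2 # u" by (simp add: blk_def)
  from assms have "Q' \<in> queues_after (replicate n b @ e # R @ [a\<^sub>1]) (replicate c b @ a\<^sub>2 # u)"
    by (simp only: blk_input front_unmatched sym.distinct simp_thms)
  from queues_after_bs[OF this] obtain p where "p \<le> n" "p \<le> c"
    "Q' \<in> queues_after (replicate (n - p) b @ e # (R @ [a\<^sub>1]) @ replicate (c - p) b) (a\<^sub>2 # u)"
    by auto
  moreover have "(R @ [a\<^sub>1]) @ replicate (c - p) b @ [a\<^sub>2] = R @ blk (c - p)"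
    by (simp add: blk_def)
  ultimately show ?thesis
    by (intro exI[of _ p]) (simp only: front_unmatched sym.distinct simp_thms append_assoc)
qed

text \<open>\<open>p\<close> counts the \<open>b\<close>'s of the queue matched while reading the blocks, \<open>ds\<close> the
  lengths of the blocks as they are pushed.\<close>
lemma queues_after_blks:
  assumes "Q' \<in> queues_after (replicate n b @ e # R) (concat (map blk cs) @ u)"
  shows "\<exists>ds p. p \<le> n \<and> length ds = length cs \<and> sum_list ds + p = sum_list cs \<and>
           Q' \<in> queues_after (replicate (n - p) b @ e # R @ concat (map blk ds)) u"
  using assms
proof (induction cs arbitrary: n R)
  case (Cons c cs)
  from queues_after_blk[of Q' n R c] Cons.prems obtain p where "p \<le> n" "p \<le> c"
    "Q' \<in> queues_after (replicate (n - p) b @ e # (R @ blk (c - p))) (concat (map blk cs) @ u)"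
    by auto
  with Cons.IH obtain ds q where "q \<le> n - p" "length ds = length cs" "sum_list ds + q = sum_list cs"
    "Q' \<in> queues_after (replicate (n - p - q) b @ e # R @ blk (c - p) @ concat (map blk ds)) u"
    by fastforce
  with \<open>p \<le> n\<close> \<open>p \<le> c\<close> show ?case
    by (intro exI[of _ "(c - p) # ds"] exI[of _ "p + q"]) (auto simp: diff_diff_add)
qed (intro exI[of _ "[]"] exI[of _ 0], simp)

text \<open>The separator \<open>e\<close> in the input either matches the queue front, which forces all the
  \<open>b\<close>'s in front of it to have been matched, or it is pushed, which leaves an extra \<open>e\<close> behind.\<close>
lemma queues_after_blks_separator:
  assumes "Q' \<in> queues_after (replicate n b @ e # R) (concat (map blk cs) @ e # u)"
  shows "(\<exists>ds. length ds = length cs \<and> sum_list ds + n = sum_list cs \<and>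
              Q' \<in> queues_after (R @ concat (map blk ds)) u)
       \<or> (\<exists>Q2. count_list Q2 e = count_list R e + 2 \<and> Q' \<in> queues_after Q2 u)"
proof -
  from queues_after_blks[OF assms] obtain ds p where "p \<le> n" "length ds = length cs"
    "sum_list ds + p = sum_list cs"
    and Q': "Q' \<in> queues_after (replicate (n - p) b @ e # R @ concat (map blk ds)) (e # u)"
    by blast
  have no_e: "count_list (concat (map blk ds)) e = 0" by (simp add: blk_def)
  show ?thesis
  proof (cases "n - p")
    case 0
    with Q' \<open>p \<le> n\<close> \<open>length ds = length cs\<close> \<open>sum_list ds + p = sum_list cs\<close> no_e show ?thesis
      by (fastforce intro: exI[of _ "e # R @ concat (map blk ds) @ [e]"])
  next
    case (Suc k)
    with Q' no_e show ?thesis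
      by (fastforce intro: exI[of _ "replicate (Suc k) b @ e # R @ concat (map blk ds) @ [e]"])
  qed
qed

subsection \<open>Distributing the loaded \<open>b\<close>'s into the blocks\<close>

fun triples_sum_to :: "nat \<Rightarrow> nat list \<Rightarrow> bool" where
  "triples_sum_to B [] = True"
| "triples_sum_to B (i1 # i2 # i3 # ks) = (i1 + i2 + i3 = B \<and> triples_sum_to B ks)"
| "triples_sum_to B _ = False"

lemma queues_after_distribution:
  assumes "W \<in> queues_after (concat (replicate n (replicate (2*B) b @ [e])) @ P)
                 (concat (replicate n (blk B @ blk B @ blk B @ [e])))"
    and "e \<notin> set W"
  shows "\<exists>ks. length ks = 3 * n \<and> triples_sum_to B ks \<and> W = P @ concat (map blk ks)"
  using assms
proof (induction n arbitrary: P)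
  case (Suc n)
  let ?R = "concat (replicate n (replicate (2*B) b @ [e])) @ P"
  let ?u = "concat (replicate n (blk B @ blk B @ blk B @ [e]))"
  from Suc.prems(1) have
    "W \<in> queues_after (replicate (2*B) b @ e # ?R) (concat (map blk [B, B, B]) @ e # ?u)"
    by simp
  from queues_after_blks_separator[OF this] show ?case
  proof (elim disjE exE conjE)
    fix ds assume "length ds = length [B, B, B]" "sum_list ds + 2 * B = sum_list [B, B, B]"
      and W: "W \<in> queues_after (?R @ concat (map blk ds)) ?u"
    then obtain i1 i2 i3 where ds: "ds = [i1, i2, i3]" and "i1 + i2 + i3 = B"
      by (auto simp: numeral_3_eq_3 length_Suc_conv)
    from W Suc.IH[of "P @ concat (map blk ds)"] Suc.prems(2) obtain ks where
      "length ks = 3 * n" "triples_sum_to B ks" "W = (P @ concat (map blk ds)) @ concat (map blk ks)"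
      by auto
    with ds \<open>i1 + i2 + i3 = B\<close> show ?thesis
      by (intro exI[of _ "ds @ ks"]) simp
  next
    fix Q2 assume Q2: "count_list Q2 e = count_list ?R e + 2" "W \<in> queues_after Q2 ?u"
    from count_list_queues_after[OF Q2(2), of e] Suc.prems(2) have "count_list Q2 e \<le> n"
      by (simp add: count_list_concat_replicate blk_def)
    moreover have "n \<le> count_list ?R e" by (simp add: count_list_concat_replicate)
    ultimately show ?thesis using Q2(1) by simp
  qed
qed simp

lemma qsteps_blk_pop_bs:
  "qsteps (replicate (p + k) b @ T, blk (p + c) @ v) (replicate k b @ T @ blk c, v)"
proof -
  let ?Q = "replicate (p + k) b @ T"
  have "qsteps (?Q, [a\<^sub>1] @ replicate p b @ replicate c b @ [a\<^sub>2] @ v)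
                (?Q @ [a\<^sub>1], replicate p b @ replicate c b @ [a\<^sub>2] @ v)"
    by (rule qsteps_push_word)
  also have "qsteps \<dots> (replicate k b @ T @ [a\<^sub>1], replicate c b @ [a\<^sub>2] @ v)"
    using qsteps_pop_word[of "replicate p b" "replicate k b @ T @ [a\<^sub>1]"]
    by (simp add: replicate_add)
  also have "qsteps \<dots> ((replicate k b @ T @ [a\<^sub>1]) @ replicate c b @ [a\<^sub>2], v)"
    using qsteps_push_word[of "replicate k b @ T @ [a\<^sub>1]" "replicate c b @ [a\<^sub>2]" v]
    by (simp only: append_assoc)
  finally show ?thesis by (simp add: blk_def replicate_add)
qed

lemma qsteps_distribution_segment:
  assumes "i1 + i2 + i3 = B"
  shows "qsteps (replicate (2*B) b @ e # R, blk B @ blk B @ blk B @ e # v)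
                (R @ blk i1 @ blk i2 @ blk i3, v)"
proof -
  have pops: "(B - i1) + (B + i1) = 2*B" "(B - i2) + (i1 + i2) = B + i1" "(B - i3) + 0 = i1 + i2"
    and kept: "(B - i1) + i1 = B" "(B - i2) + i2 = B" "(B - i3) + i3 = B"
    using assms by auto
  have "qsteps (replicate (2*B) b @ e # R, blk B @ blk B @ blk B @ e # v)
                (replicate (B + i1) b @ e # R @ blk i1, blk B @ blk B @ e # v)"
    using qsteps_blk_pop_bs[of "B - i1" "B + i1" "e # R" i1] unfolding pops kept by simp
  also have "qsteps \<dots> (replicate (i1 + i2) b @ e # R @ blk i1 @ blk i2, blk B @ e # v)"
    using qsteps_blk_pop_bs[of "B - i2" "i1 + i2" "e # R @ blk i1" i2] unfolding pops kept by simp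
  also have "qsteps \<dots> (e # R @ blk i1 @ blk i2 @ blk i3, e # v)"
    using qsteps_blk_pop_bs[of "B - i3" 0 "e # R @ blk i1 @ blk i2" i3] unfolding pops kept by simp
  also have "qstep \<dots> (R @ blk i1 @ blk i2 @ blk i3, v)"
    by (rule qstep.pop)
  finally show ?thesis .
qed

lemma qsteps_distribution:
  assumes "triples_sum_to B ks" and "length ks = 3 * n"
  shows "qsteps (concat (replicate n (replicate (2*B) b @ [e])) @ P,
                 concat (replicate n (blk B @ blk B @ blk B @ [e])) @ v)
                (P @ concat (map blk ks), v)"
  using assms
proof (induction B ks arbitrary: n P rule: triples_sum_to.induct)
  case (2 B i1 i2 i3 ks)
  then obtain n' where n: "n = Suc n'" and "length ks = 3 * n'" by (cases n) auto
  let ?L = "concat (replicate n' (replicate (2*B) b @ [e]))"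
  let ?D = "concat (replicate n' (blk B @ blk B @ blk B @ [e]))"
  from "2.prems"(1) have "qsteps (replicate (2*B) b @ e # ?L @ P, blk B @ blk B @ blk B @ e # ?D @ v)
                      ((?L @ P) @ blk i1 @ blk i2 @ blk i3, ?D @ v)"
    using qsteps_distribution_segment[of i1 i2 i3 B "?L @ P" "?D @ v"] by simp
  also have "qsteps \<dots> ((P @ blk i1 @ blk i2 @ blk i3) @ concat (map blk ks), v)"
    using "2.IH"[of n' "P @ blk i1 @ blk i2 @ blk i3"] "2.prems"(1) \<open>length ks = 3 * n'\<close> by simp
  finally show ?case using n by simp
qed auto

lemma map_upt_from_one: "map i [1..<Suc n] = map (\<lambda>k. i (Suc k)) [0..<n]"
  by (simp add: map_Suc_upt[symmetric] del: upt_Suc)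

lemma map_upt_from_one_Suc3:
  "map i [1..<Suc (3 * Suc m)] = i 1 # i 2 # i 3 # map (\<lambda>k. i (k + 3)) [1..<Suc (3 * m)]"
proof -
  have "3 * Suc m = Suc (Suc (Suc (3 * m)))" by simp
  then have "map i [1..<Suc (3 * Suc m)] = map (\<lambda>k. i (Suc k)) [0..<Suc (Suc (Suc (3 * m)))]"
    by (simp only: map_upt_from_one)
  also have "\<dots> = i 1 # i 2 # i 3 # map (\<lambda>k. i (Suc (Suc (Suc (Suc k))))) [0..<3 * m]"
    by (simp only: map_upt_Suc) (simp add: numeral_eq_Suc del: upt_Suc)
  also have "map (\<lambda>k. i (Suc (Suc (Suc (Suc k))))) [0..<3 * m] = map (\<lambda>k. i (k + 3)) [1..<Suc (3 * m)]"
    using map_upt_from_one[of "\<lambda>k. i (k + 3)" "3 * m"] by (simp add: numeral_eq_Suc del: upt_Suc)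
  finally show ?thesis .
qed

lemma ball_atLeastAtMost_one_Suc:
  "(\<forall>j\<in>{1..Suc m}. P j) \<longleftrightarrow> P 1 \<and> (\<forall>j\<in>{1..m}. P (Suc j))"
proof -
  have "{1..Suc m} = insert 1 (Suc ` {1..m})" by auto
  then show ?thesis by (simp only:) blast
qed

lemma triples_sum_to_map_upt:
  "triples_sum_to B (map i [1..<Suc (3 * m)]) \<longleftrightarrow>
     (\<forall>j\<in>{1..m}. i (3*j-2) + i (3*j-1) + i (3*j) = B)"
proof (induction m arbitrary: i)
  case (Suc m)
  have "triples_sum_to B (map i [1..<Suc (3 * Suc m)]) \<longleftrightarrow>
      i 1 + i 2 + i 3 = B \<and> (\<forall>j\<in>{1..m}. i (3*j-2+3) + i (3*j-1+3) + i (3*j+3) = B)"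
    unfolding map_upt_from_one_Suc3 using Suc.IH[of "\<lambda>k. i (k + 3)"] by simp
  also have "\<dots> \<longleftrightarrow> (\<forall>j\<in>{1..Suc m}. i (3*j-2) + i (3*j-1) + i (3*j) = B)"
  proof -
    have "3*j-2+3 = 3 * Suc j - 2" "3*j-1+3 = 3 * Suc j - 1" "3*j+3 = 3 * Suc j" if "j \<in> {1..m}" for j
      using that by auto
    then show ?thesis
      unfolding ball_atLeastAtMost_one_Suc by (intro conj_cong ball_cong) (simp_all add: add.commute)
  qed
  finally show ?case .
qed simp

lemma map_nth_upt_from_one: "map (\<lambda>k. ks ! (k - 1)) [1..<Suc (length ks)] = ks"
  unfolding map_upt_from_one by (simp add: map_nth)

lemma set_Ver: "set (Ver ns m B) \<subseteq> {a\<^sub>1, a\<^sub>2, b, c\<^sub>1, c\<^sub>2, x, y}"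
  by (auto simp: Ver_def prodw_def vw_def Dw_def Ew_def Fw_def pw_def U_def)

lemma wS_eq:
  "wS ns m B = e\<^sub>0 # concat (replicate m (replicate (2*B) b @ [e])) @
                e\<^sub>0 # concat (replicate m (blk B @ blk B @ blk B @ [e])) @ Ver ns m B"
  by (simp add: wS_def Load_def Dist_def prodw_def pw_def blk_def map_replicate_const
      numeral_3_eq_3)

lemma prodw_blk:
  "prodw n (\<lambda>k. [a\<^sub>1] @ replicate (i k) b @ [a\<^sub>2]) = concat (map blk (map i [1..<Suc n]))"
  by (simp add: prodw_def blk_def comp_def del: upt_Suc)

lemma qsteps_wS_blocks:
  assumes "triples_sum_to B ks" and "length ks = 3 * m"
  shows "qsteps ([], wS ns m B) (concat (map blk ks), Ver ns m B)"
proof -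
  let ?L = "concat (replicate m (replicate (2*B) b @ [e]))"
  let ?D = "concat (replicate m (blk B @ blk B @ blk B @ [e]))"
  let ?V = "Ver ns m B"
  have "qsteps ([], e\<^sub>0 # ?L @ e\<^sub>0 # ?D @ ?V) (e\<^sub>0 # ?L, e\<^sub>0 # ?D @ ?V)"
    using qsteps_push_word[of "[]" "e\<^sub>0 # ?L" "e\<^sub>0 # ?D @ ?V"] by simp
  also have "qstep \<dots> (?L, ?D @ ?V)"
    by (rule qstep.pop)
  also have "qsteps \<dots> (concat (map blk ks), ?V)"
    using qsteps_distribution[OF assms, of "[]" ?V] by simp
  finally show ?thesis by (simp only: wS_eq)
qed

lemma qsteps_wS_Ver_imp_blocks:
  assumes loaded: "qsteps ([], wS ns m B) (W, Ver ns m B)"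
    and accepted: "qsteps (W, Ver ns m B) ([], [])"
  shows "\<exists>ks. length ks = 3 * m \<and> triples_sum_to B ks \<and> W = concat (map blk ks)"
proof -
  let ?L = "concat (replicate m (replicate (2*B) b @ [e]))"
  let ?D = "concat (replicate m (blk B @ blk B @ blk B @ [e]))"
  from accepted have "set W \<subseteq> set (Ver ns m B)"
    using qsteps_queue_subset[of "(W, Ver ns m B)" "([], [])"] by simp
  with set_Ver[of ns m B] have W_no_e0: "e\<^sub>0 \<notin> set W" and W_no_e: "e \<notin> set W"
    by fastforce+
  have L_no_e0: "e\<^sub>0 \<notin> set ?L" and D_no_e0: "e\<^sub>0 \<notin> set ?D" by (auto simp: blk_def)
  from loaded have "qsteps ([], (e\<^sub>0 # ?L @ e\<^sub>0 # ?D) @ Ver ns m B) (W, Ver ns m B)"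
    by (simp add: wS_eq)
  then have "W \<in> queues_after [] (e\<^sub>0 # ?L @ e\<^sub>0 # ?D)"
    by (rule qsteps_imp_queues_after)
  then have "W \<in> queues_after (?L @ []) ?D"
    using queues_after_marker[OF _ L_no_e0 D_no_e0 W_no_e0] by (simp only: append_Nil2)
  from queues_after_distribution[OF this W_no_e] show ?thesis
    by (simp only: append_Nil)
qed

theorem lemma4:
  fixes ns :: "nat list" and m B :: nat
  assumes "three_partition_instance ns m B"
  shows "(\<forall>i :: nat \<Rightarrow> nat.
            (\<forall>j \<in> {1..m}. i (3*j-2) + i (3*j-1) + i (3*j) = B) \<longrightarrow>
            qsteps ([], wS ns m B)
                   (prodw (3*m) (\<lambda>k. [a\<^sub>1] @ replicate (i k) b @ [a\<^sub>2]), Ver ns m B))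
       \<and> (\<forall>W. qsteps ([], wS ns m B) (W, Ver ns m B) \<and> qsteps (W, Ver ns m B) ([], []) \<longrightarrow>
            (\<exists>i :: nat \<Rightarrow> nat.
               (\<forall>j \<in> {1..m}. i (3*j-2) + i (3*j-1) + i (3*j) = B) \<and>
               W = prodw (3*m) (\<lambda>k. [a\<^sub>1] @ replicate (i k) b @ [a\<^sub>2])))"
proof (intro conjI allI impI)
  fix i :: "nat \<Rightarrow> nat"
  assume "\<forall>j \<in> {1..m}. i (3*j-2) + i (3*j-1) + i (3*j) = B"
  then have "triples_sum_to B (map i [1..<Suc (3*m)])"
    by (simp only: triples_sum_to_map_upt)
  from qsteps_wS_blocks[OF this] show
    "qsteps ([], wS ns m B) (prodw (3*m) (\<lambda>k. [a\<^sub>1] @ replicate (i k) b @ [a\<^sub>2]), Ver ns m B)"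
    by (simp only: prodw_blk length_map length_upt diff_Suc_1)
next
  fix W
  assume "qsteps ([], wS ns m B) (W, Ver ns m B) \<and> qsteps (W, Ver ns m B) ([], [])"
  then obtain ks where "length ks = 3 * m" "triples_sum_to B ks" "W = concat (map blk ks)"
    using qsteps_wS_Ver_imp_blocks by blast
  moreover define i where "i = (\<lambda>k. ks ! (k - 1))"
  ultimately have "map i [1..<Suc (3*m)] = ks" "triples_sum_to B ks" "W = concat (map blk ks)"
    using map_nth_upt_from_one[of ks] by simp_all
  then show "\<exists>i. (\<forall>j \<in> {1..m}. i (3*j-2) + i (3*j-1) + i (3*j) = B) \<and>
               W = prodw (3*m) (\<lambda>k. [a\<^sub>1] @ replicate (i k) b @ [a\<^sub>2])"
    by (intro exI[of _ i]) (simp only: prodw_blk triples_sum_to_map_upt[symmetric] simp_thms)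
qed

end
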